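(* Let $\mathrm{SU}(2)$ be the group of complex unitary $2\times 2$ matrices of determinant $1$. For $A,B,C\in\mathrm{SU}(2)$, the spectral curve of the triple $(A,B,C)$ is the curve in the complex projective plane with homogeneous coordinates $(\lambda:\mu:\nu)$ given by $\det(\lambda A+\mu B+\nu C)=0$; every such curve has the form $$\lambda^2+\mu^2+\nu^2+2p\,\lambda\mu+2q\,\lambda\nu+2r\,\mu\nu=0$$ for some real $p,q,r$. A curve of this form (with $p,q,r\in\mathbb{R}$) is the spectral curve of some triple $(A,B,C)\in\mathrm{SU}(2)^3$ if and only if $(p,q,r)$ lies in the body $$\Delta=\{(p,q,r)\in\mathbb{R}^3:\ -1\le p\le 1,\ -1\le q\le 1,\ -1\le r\le 1,\ 1-p^2-q^2-r^2+2pqr\ge 0\}.$$ *)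

theory Defs
  imports "HOL-Analysis.Analysis"
begin

definition conj_transpose :: "complex^'n^'m \<Rightarrow> complex^'m^'n" where
  "conj_transpose A = (\<chi> i j. cnj (A $ j $ i))"

definition SU2 :: "(complex^2^2) set" where
  "SU2 = {A. A ** conj_transpose A = mat 1 \<and> conj_transpose A ** A = mat 1 \<and> det A = 1}"

definition Delta :: "(real \<times> real \<times> real) set" where
  "Delta = {(p, q, r). -1 \<le> p \<and> p \<le> 1 \<and> -1 \<le> q \<and> q \<le> 1 \<and> -1 \<le> r \<and> r \<le> 1
                      \<and> 1 - p^2 - q^2 - r^2 + 2*p*q*r \<ge> 0}"

definition lincomb3 ::
  "complex \<Rightarrow> complex \<Rightarrow> complex \<Rightarrow> complex^2^2 \<Rightarrow> complex^2^2 \<Rightarrow> complex^2^2 \<Rightarrow> complex^2^2" where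
  "lincomb3 l m n A B C = (\<chi> i j. l * A $ i $ j + m * B $ i $ j + n * C $ i $ j)"

text \<open>The spectral curve det(l A + m B + n C) = 0 of the triple (A,B,C) is the curve
  l^2 + m^2 + n^2 + 2p lm + 2q ln + 2r mn = 0, i.e. the determinant equals this quadratic form
  identically (both are normalised by the coefficient 1 of l^2, since det A = 1).\<close>
definition has_spectral_curve ::
  "complex^2^2 \<Rightarrow> complex^2^2 \<Rightarrow> complex^2^2 \<Rightarrow> real \<Rightarrow> real \<Rightarrow> real \<Rightarrow> bool" where
  "has_spectral_curve A B C p q r \<longleftrightarrow>
     (\<forall>l m n :: complex. det (lincomb3 l m n A B C) =
        l^2 + m^2 + n^2 + 2 * of_real p * l * m + 2 * of_real q * l * n + 2 * of_real r * m * n)"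

end

theory Submission
  imports Defs
begin

text \<open>Writing an element of SU(2) as the matrix with first row (a, b) and second row
  (-cnj b, cnj a), with (a, b) a unit vector of \<open>\<complex>\<^sup>2 = \<real>\<^sup>4\<close>, identifies SU(2) with the unit
  sphere, and det(l A + m B + n C) becomes the quadratic form whose off-diagonal coefficients
  are the real inner products of the three unit vectors. Hence the admissible (p, q, r) are
  exactly the off-diagonal entries of Gram matrices of three unit vectors, i.e. of positive
  semidefinite matrices with unit diagonal, and the last inequality defining Delta is the
  determinant of such a matrix.\<close>

lemma Delta_discriminant:
  fixes p q r :: real
  shows "1 - p^2 - q^2 - r^2 + 2*p*q*r = (1 - p^2) * (1 - q^2) - (r - p*q)^2"
  by (simp add: power2_eq_square algebra_simps)

lemma Gram_unit_vectors_in_Delta: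
  fixes u v w :: "'a::real_inner"
  assumes "norm u = 1" "norm v = 1" "norm w = 1"
  shows "(u \<bullet> v, u \<bullet> w, v \<bullet> w) \<in> Delta"
proof -
  have bound: "\<bar>x \<bullet> y\<bar> \<le> 1" if "norm x = 1" "norm y = 1" for x y :: 'a
    using Cauchy_Schwarz_ineq2[of x y] that by simp
  \<comment> \<open>Cauchy-Schwarz for the components of v and w orthogonal to u\<close>
  have "((v - (u \<bullet> v) *\<^sub>R u) \<bullet> (w - (u \<bullet> w) *\<^sub>R u))^2 \<le>
      ((v - (u \<bullet> v) *\<^sub>R u) \<bullet> (v - (u \<bullet> v) *\<^sub>R u)) * ((w - (u \<bullet> w) *\<^sub>R u) \<bullet> (w - (u \<bullet> w) *\<^sub>R u))"
    by (rule Cauchy_Schwarz_ineq)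
  then have "(v \<bullet> w - (u \<bullet> v) * (u \<bullet> w))^2 \<le> (1 - (u \<bullet> v)^2) * (1 - (u \<bullet> w)^2)"
    using assms[unfolded norm_eq_1]
    by (simp add: inner_commute power2_eq_square algebra_simps)
  then show ?thesis
    using bound assms unfolding Delta_def Delta_discriminant by (auto simp: abs_le_iff)
qed

lemma Delta_obtain_second_coordinate:
  assumes "(p, q, r) \<in> Delta"
  obtains s where "q^2 + s^2 \<le> 1" "p * q + sqrt (1 - p^2) * s = r"
proof -
  from assms have p2: "p^2 \<le> 1" and q2: "q^2 \<le> 1"
    and disc: "(r - p*q)^2 \<le> (1 - p^2) * (1 - q^2)"
    by (auto simp: Delta_def Delta_discriminant abs_square_le_1 abs_le_iff)
  show ?thesis
  proof (cases "p^2 = 1")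
    case True
    then have "r = p * q" using disc by simp
    with True q2 show ?thesis by (intro that[of 0]) auto
  next
    case False
    define c where "c = sqrt (1 - p^2)"
    have c: "c > 0" "c^2 = 1 - p^2" using p2 False by (auto simp: c_def)
    define s where "s = (r - p*q) / c"
    have "c^2 * s^2 \<le> c^2 * (1 - q^2)"
      using c disc by (simp add: s_def power_divide)
    then have "s^2 \<le> 1 - q^2" using c(1) by (simp add: mult_le_cancel_left_pos)
    then have "q^2 + s^2 \<le> 1" by simp
    moreover have "p * q + c * s = r" using c by (simp add: s_def)
    ultimately show ?thesis using that c_def by blast
  qed
qed

lemma inner_complex_pair: "(a, b) \<bullet> (c, d) = Re (a * cnj c + b * cnj d)"
  by (simp add: inner_complex_def)

lemma norm_complex_pair_eq_1: "norm (a, b) = 1 \<longleftrightarrow> a * cnj a + b * cnj b = 1"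
  unfolding norm_eq_1 inner_complex_pair by (simp add: complex_eq_iff)

lemma Delta_obtain_Gram_unit_vectors:
  assumes "(p, q, r) \<in> Delta"
  obtains x y z :: "complex \<times> complex"
  where "norm x = 1" "norm y = 1" "norm z = 1" "x \<bullet> y = p" "x \<bullet> z = q" "y \<bullet> z = r"
proof -
  obtain s where s: "q^2 + s^2 \<le> 1" "p * q + sqrt (1 - p^2) * s = r"
    using Delta_obtain_second_coordinate[OF assms] .
  have "p^2 \<le> 1" using assms by (auto simp: Delta_def abs_square_le_1 abs_le_iff)
  \<comment> \<open>Gram-Schmidt in reverse: x and y span the first two real coordinates of \<open>\<real>\<^sup>4\<close>\<close>
  define x where "x = (1 :: complex, 0 :: complex)"
  define y where "y = (Complex p (sqrt (1 - p^2)), 0 :: complex)"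
  define z where "z = (Complex q s, complex_of_real (sqrt (1 - q^2 - s^2)))"
  have "norm x = 1" "norm y = 1" "norm z = 1"
    using \<open>p^2 \<le> 1\<close> s unfolding x_def y_def z_def norm_complex_pair_eq_1
    by (simp_all add: complex_eq_iff power2_eq_square)
  moreover have "x \<bullet> y = p" "x \<bullet> z = q" "y \<bullet> z = r"
    using s unfolding x_def y_def z_def inner_complex_pair by simp_all
  ultimately show ?thesis using that by blast
qed

definition su2_matrix :: "complex \<times> complex \<Rightarrow> complex^2^2" where
  "su2_matrix x = (case x of (a, b) \<Rightarrow>
     \<chi> i j. if i = 1 then (if j = 1 then a else b) else (if j = 1 then - cnj b else cnj a))"

lemma su2_matrix_nth [simp]:
  "su2_matrix (a, b) $ 1 $ 1 = a" "su2_matrix (a, b) $ 1 $ 2 = b"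
  "su2_matrix (a, b) $ 2 $ 1 = - cnj b" "su2_matrix (a, b) $ 2 $ 2 = cnj a"
  by (simp_all add: su2_matrix_def)

lemma matrix2_eq_iff:
  "(X :: 'a^2^2) = Y \<longleftrightarrow> X$1$1 = Y$1$1 \<and> X$1$2 = Y$1$2 \<and> X$2$1 = Y$2$1 \<and> X$2$2 = Y$2$2"
  by (auto simp: vec_eq_iff forall_2)

lemma SU2_eq_image_unit_sphere: "SU2 = su2_matrix ` {x. norm x = 1}"
proof (intro equalityI subsetI)
  fix A assume "A \<in> SU2"
  then have M: "A ** conj_transpose A = mat 1" and D: "det A = 1" by (auto simp: SU2_def)
  define a b c d where "a = A$1$1" "b = A$1$2" "c = A$2$1" "d = A$2$2"
  have unit: "a * cnj a + b * cnj b = 1"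
    using arg_cong[OF M, of "\<lambda>X. X$1$1"]
    by (simp add: matrix_matrix_mult_def sum_2 conj_transpose_def mat_def a_b_c_d_def)
  have "a * cnj c + b * cnj d = 0"
    using arg_cong[OF M, of "\<lambda>X. X$1$2"]
    by (simp add: matrix_matrix_mult_def sum_2 conj_transpose_def mat_def a_b_c_d_def)
  from arg_cong[OF this, of cnj] have orth: "cnj a * c + cnj b * d = 0"
    by simp
  have "a * d - b * c = 1" using D by (simp add: det_2 a_b_c_d_def)
  then have "c = - cnj b" "d = cnj a" using unit orth by algebra+
  then have "A = su2_matrix (a, b)" by (simp add: matrix2_eq_iff a_b_c_d_def)
  moreover have "norm (a, b) = 1" using unit by (simp add: norm_complex_pair_eq_1)
  ultimately show "A \<in> su2_matrix ` {x. norm x = 1}" by blast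
next
  fix A assume "A \<in> su2_matrix ` {x. norm x = 1}"
  then obtain a b where A: "A = su2_matrix (a, b)" and unit: "a * cnj a + b * cnj b = 1"
    by (auto simp: norm_complex_pair_eq_1)
  have "A ** conj_transpose A = mat 1" "conj_transpose A ** A = mat 1"
    using unit by (simp_all add: A matrix2_eq_iff matrix_matrix_mult_def sum_2 conj_transpose_def
        mat_def algebra_simps)
  moreover have "det A = 1" using unit by (simp add: A det_2 algebra_simps)
  ultimately show "A \<in> SU2" by (simp add: SU2_def)
qed

lemma add_cnj_pairing_eq_inner:
  "a * cnj c + b * cnj d + (c * cnj a + d * cnj b) = 2 * of_real ((a, b) \<bullet> (c, d))"
proof -
  have "a * cnj c + b * cnj d + (c * cnj a + d * cnj b) =
        (a * cnj c + b * cnj d) + cnj (a * cnj c + b * cnj d)"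
    by simp
  also have "\<dots> = 2 * of_real ((a, b) \<bullet> (c, d))"
    unfolding complex_add_cnj inner_complex_pair by simp
  finally show ?thesis .
qed

lemma has_spectral_curve_su2_matrix:
  assumes "norm x = 1" "norm y = 1" "norm z = 1"
  shows "has_spectral_curve (su2_matrix x) (su2_matrix y) (su2_matrix z) (x \<bullet> y) (x \<bullet> z) (y \<bullet> z)"
proof -
  obtain a1 b1 a2 b2 a3 b3 where xyz: "x = (a1, b1)" "y = (a2, b2)" "z = (a3, b3)"
    by (metis surj_pair)
  have "det (lincomb3 l m n (su2_matrix x) (su2_matrix y) (su2_matrix z)) =
      l^2 * (a1 * cnj a1 + b1 * cnj b1) + m^2 * (a2 * cnj a2 + b2 * cnj b2)
      + n^2 * (a3 * cnj a3 + b3 * cnj b3)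
      + l * m * (a1 * cnj a2 + b1 * cnj b2 + (a2 * cnj a1 + b2 * cnj b1))
      + l * n * (a1 * cnj a3 + b1 * cnj b3 + (a3 * cnj a1 + b3 * cnj b1))
      + m * n * (a2 * cnj a3 + b2 * cnj b3 + (a3 * cnj a2 + b3 * cnj b2))" for l m n
    unfolding xyz by (simp add: det_2 lincomb3_def) (simp add: algebra_simps power2_eq_square)
  then show ?thesis
    using assms unfolding has_spectral_curve_def xyz norm_complex_pair_eq_1 add_cnj_pairing_eq_inner
    by (simp add: algebra_simps)
qed

lemma has_spectral_curve_unique:
  assumes "has_spectral_curve A B C p q r" "has_spectral_curve A B C p' q' r'"
  shows "p = p' \<and> q = q' \<and> r = r'"
proof -
  have "l^2 + m^2 + n^2 + 2 * of_real p * l * m + 2 * of_real q * l * n + 2 * of_real r * m * n =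
        l^2 + m^2 + n^2 + 2 * of_real p' * l * m + 2 * of_real q' * l * n + 2 * of_real r' * m * n"
    for l m n :: complex
    using assms unfolding has_spectral_curve_def by metis
  from this[of 1 1 0] this[of 1 0 1] this[of 0 1 1] show ?thesis by simp
qed

theorem proposition1p1:
  shows "(\<forall>A\<in>SU2. \<forall>B\<in>SU2. \<forall>C\<in>SU2. \<exists>p q r. has_spectral_curve A B C p q r) \<and>
         (\<forall>p q r. (\<exists>A\<in>SU2. \<exists>B\<in>SU2. \<exists>C\<in>SU2. has_spectral_curve A B C p q r)
                   \<longleftrightarrow> (p, q, r) \<in> Delta)"
proof (intro conjI allI iffI)
  show "\<forall>A\<in>SU2. \<forall>B\<in>SU2. \<forall>C\<in>SU2. \<exists>p q r. has_spectral_curve A B C p q r"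
    unfolding SU2_eq_image_unit_sphere using has_spectral_curve_su2_matrix by blast
next
  fix p q r
  assume "\<exists>A\<in>SU2. \<exists>B\<in>SU2. \<exists>C\<in>SU2. has_spectral_curve A B C p q r"
  then obtain x y z where unit: "norm x = 1" "norm y = 1" "norm z = 1"
    and curve: "has_spectral_curve (su2_matrix x) (su2_matrix y) (su2_matrix z) p q r"
    unfolding SU2_eq_image_unit_sphere by blast
  have "p = x \<bullet> y \<and> q = x \<bullet> z \<and> r = y \<bullet> z"
    using has_spectral_curve_unique[OF curve has_spectral_curve_su2_matrix[OF unit]] .
  then show "(p, q, r) \<in> Delta" using Gram_unit_vectors_in_Delta[OF unit] by simp
next
  fix p q r
  assume "(p, q, r) \<in> Delta"
  then obtain x y z :: "complex \<times> complex" where "norm x = 1" "norm y = 1" "norm z = 1"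
    and "x \<bullet> y = p" "x \<bullet> z = q" "y \<bullet> z = r"
    by (rule Delta_obtain_Gram_unit_vectors)
  then show "\<exists>A\<in>SU2. \<exists>B\<in>SU2. \<exists>C\<in>SU2. has_spectral_curve A B C p q r"
    unfolding SU2_eq_image_unit_sphere using has_spectral_curve_su2_matrix by blast
qed

end
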